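(* Let $G=(V,E)$ be a graph with no isolated vertices and maximum degree $\Delta$, and let $m\ge1$ be an integer. The greedy algorithm applied to $U=V$ and the function $f(A)=\sum_{v\in V}m_A(v)$ returns a fault-tolerant total dominating set $S$ (with parameter $m$) satisfying $|S|\le\big(1+\ln(\Delta+m-1)\big)\cdot|S^*|$, where $S^*$ is a minimum-cardinality fault-tolerant total dominating set of $G$.
   Context: $N(v)$ is the neighborhood of $v$, $N_C(v)=N(v)\cap C$. $m_A(v)=m$ if [$v\notin A$ and $|N_A(v)|\ge m$] or [$v\in A$ and $|N_A(v)|>0$]; $m_A(v)=m-1$ if $v\in A$ and $|N_A(v)|=0$; $m_A(v)=|N_A(v)|$ otherwise. $\Delta_x f(A)=f(A\cup\{x\})-f(A)$. The greedy algorithm: start with $S=\emptyset$; while some $u\in U\setminus S$ has $\Delta_u f(S)>0$, pick $x\in U\setminus S$ maximizing $\Delta_u f(S)$ (ties arbitrary) and add it to $S$; return $S$. A fault-tolerant total dominating set with parameter $m$ is a set $S\subseteq V$ such that every $v\in V\setminus S$ has at least $m$ neighbors in $S$ and every $v\in S$ has at least one neighbor in $S$. *)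

theory Defs
  imports Complex_Main
begin

definition nbhd :: "'a set \<Rightarrow> ('a \<Rightarrow> 'a \<Rightarrow> bool) \<Rightarrow> 'a \<Rightarrow> 'a set" where
  "nbhd V E v = {u \<in> V. E v u}"

definition nbhd_in :: "'a set \<Rightarrow> ('a \<Rightarrow> 'a \<Rightarrow> bool) \<Rightarrow> 'a set \<Rightarrow> 'a \<Rightarrow> 'a set" where
  "nbhd_in V E C v = nbhd V E v \<inter> C"

definition max_degree :: "'a set \<Rightarrow> ('a \<Rightarrow> 'a \<Rightarrow> bool) \<Rightarrow> nat" where
  "max_degree V E = Max ((\<lambda>v. card (nbhd V E v)) ` V)"

definition mA :: "'a set \<Rightarrow> ('a \<Rightarrow> 'a \<Rightarrow> bool) \<Rightarrow> nat \<Rightarrow> 'a set \<Rightarrow> 'a \<Rightarrow> nat" where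
  "mA V E m A v =
     (if (v \<notin> A \<and> card (nbhd_in V E A v) \<ge> m) \<or> (v \<in> A \<and> card (nbhd_in V E A v) > 0) then m
      else if v \<in> A \<and> card (nbhd_in V E A v) = 0 then m - 1
      else card (nbhd_in V E A v))"

definition f_ftd :: "'a set \<Rightarrow> ('a \<Rightarrow> 'a \<Rightarrow> bool) \<Rightarrow> nat \<Rightarrow> 'a set \<Rightarrow> int" where
  "f_ftd V E m A = (\<Sum>v\<in>V. int (mA V E m A v))"

definition marginal :: "('a set \<Rightarrow> int) \<Rightarrow> 'a \<Rightarrow> 'a set \<Rightarrow> int" where
  "marginal f x A = f (insert x A) - f A"

text \<open>Reachable states of the greedy algorithm (ties broken arbitrarily).\<close>
inductive greedy_reach :: "'a set \<Rightarrow> ('a set \<Rightarrow> int) \<Rightarrow> 'a set \<Rightarrow> bool" for U f where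
  start: "greedy_reach U f {}"
| step: "\<lbrakk> greedy_reach U f S; \<exists>u \<in> U - S. marginal f u S > 0; x \<in> U - S;
           \<forall>u \<in> U - S. marginal f u S \<le> marginal f x S \<rbrakk>
         \<Longrightarrow> greedy_reach U f (insert x S)"

definition greedy_output :: "'a set \<Rightarrow> ('a set \<Rightarrow> int) \<Rightarrow> 'a set \<Rightarrow> bool" where
  "greedy_output U f S \<longleftrightarrow> greedy_reach U f S \<and> \<not> (\<exists>u \<in> U - S. marginal f u S > 0)"

definition is_fttds :: "'a set \<Rightarrow> ('a \<Rightarrow> 'a \<Rightarrow> bool) \<Rightarrow> nat \<Rightarrow> 'a set \<Rightarrow> bool" where
  "is_fttds V E m S \<longleftrightarrow> S \<subseteq> V \<and>
     (\<forall>v \<in> V - S. card (nbhd_in V E S v) \<ge> m) \<and>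
     (\<forall>v \<in> S. card (nbhd_in V E S v) \<ge> 1)"

definition is_min_fttds :: "'a set \<Rightarrow> ('a \<Rightarrow> 'a \<Rightarrow> bool) \<Rightarrow> nat \<Rightarrow> 'a set \<Rightarrow> bool" where
  "is_min_fttds V E m S \<longleftrightarrow> is_fttds V E m S \<and>
     (\<forall>T. is_fttds V E m T \<longrightarrow> card S \<le> card T)"

end

theory Submission
  imports Defs
begin

(*
  Write m_A(v) = min(m, |N_A(v)| + (m - 1)[v \<in> A]).  Each m_A(v) is a truncated modular
  function of A, so f(A) = \<Sum>v m_A(v) is monotone and submodular, f({}) = 0, every singleton
  gains at most d = \<Delta> + m - 1, and f attains its maximum m|V| exactly on the fault-tolerant
  total dominating sets (V is one, as there are no isolated vertices).  Hence the greedy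
  output S is such a set, and Wolsey's analysis of greedy submodular cover applies.

  Let k = |S*| and let r = f(V) - f(S) be the current deficit.  Submodularity gives a greedy
  gain of at least max(1, r/k), and the potential \<phi>(r) = k - r for r \<le> k, k ln(k/r) for r > k
  drops by at least 1 under such a step.  So |S| \<le> k ln d + \<phi>(r) holds throughout: initially
  r \<le> kd gives \<phi>(r) \<ge> -k ln d, and at the end r = 0 gives |S| \<le> k ln d + k.
*)

definition greedy_potential :: "real \<Rightarrow> real \<Rightarrow> real" where
  "greedy_potential k r = (if r \<le> k then k - r else - k * ln (r / k))"

lemma greedy_potential_le: "r \<le> k \<Longrightarrow> greedy_potential k r = k - r"
  by (simp add: greedy_potential_def)

lemma greedy_potential_gt: "0 < k \<Longrightarrow> k < r \<Longrightarrow> greedy_potential k r = k * (ln k - ln r)"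
  by (simp add: greedy_potential_def ln_div algebra_simps)

lemma greedy_potential_step:
  fixes k r \<delta> :: real
  assumes k: "k > 0" and \<delta>: "\<delta> \<ge> 1" and r_le: "r \<le> k * \<delta>" and s: "0 \<le> r - \<delta>"
  shows "greedy_potential k r + 1 \<le> greedy_potential k (r - \<delta>)"
proof (cases "r \<le> k")
  case True
  then show ?thesis using \<delta> by (simp add: greedy_potential_le)
next
  case False
  define s where "s = r - \<delta>"
  have r: "r > 0" using False k by linarith
  have "1 \<le> k * \<delta> / r" using r_le r by simp
  also have "\<dots> \<le> greedy_potential k s - greedy_potential k r"
  proof (cases "s \<le> k")
    case True
    have "(r - k) / r \<le> ln r - ln k" using ln_diff_le[OF k r] r by (simp add: diff_divide_distrib)
    then have "k * ((r - k) / r) \<le> k * (ln r - ln k)" using k by (intro mult_left_mono) auto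
    have "k * \<delta> / r = (k - s) + k * ((r - k) / r) - (r - k) * (k - s) / r"
      using r unfolding s_def by (simp add: field_simps)
    also have "\<dots> \<le> (k - s) + k * ((r - k) / r)" using True False r by simp
    also have "\<dots> \<le> (k - s) + k * (ln r - ln k)"
      using \<open>k * ((r - k) / r) \<le> k * (ln r - ln k)\<close> by simp
    also have "\<dots> = greedy_potential k s - greedy_potential k r"
      using True False k by (simp add: greedy_potential_le greedy_potential_gt algebra_simps)
    finally show ?thesis .
  next
    case False
    have "s > 0" using False k by linarith
    have "\<delta> / r \<le> ln r - ln s"
      using ln_diff_le[OF \<open>s > 0\<close> r] r unfolding s_def by (simp add: diff_divide_distrib)
    then have "k * (\<delta> / r) \<le> k * (ln r - ln s)" using k by (intro mult_left_mono) auto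
    then show ?thesis
      using False \<open>\<not> r \<le> k\<close> k by (simp add: greedy_potential_gt algebra_simps)
  qed
  finally show ?thesis unfolding s_def by simp
qed

lemma greedy_potential_ge:
  fixes k d r :: real
  assumes k: "k > 0" and d: "d \<ge> 1" and r: "0 \<le> r" "r \<le> k * d"
  shows "- k * ln d \<le> greedy_potential k r"
proof (cases "r \<le> k")
  case True
  moreover have "0 \<le> k * ln d" using k d by simp
  ultimately show ?thesis by (simp add: greedy_potential_le)
next
  case False
  have "r / k \<le> d" using r(2) k by (simp add: divide_le_eq mult.commute)
  then have "ln (r / k) \<le> ln d" using False k d by simp
  then show ?thesis using False k by (simp add: greedy_potential_def)
qed

lemma greedy_reach_subset: "greedy_reach U f S \<Longrightarrow> S \<subseteq> U"
  by (induction rule: greedy_reach.induct) auto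

lemma greedy_reach_finite: "greedy_reach U f S \<Longrightarrow> finite S"
  by (induction rule: greedy_reach.induct) auto

lemma marginal_member: "y \<in> A \<Longrightarrow> marginal f y A = 0"
  by (simp add: marginal_def insert_absorb)

locale submodular_cover =
  fixes U :: "'a set" and f :: "'a set \<Rightarrow> int"
  assumes finite_U: "finite U"
    and mono: "A \<subseteq> C \<Longrightarrow> f A \<le> f C"
    and diminishing_returns: "A \<subseteq> C \<Longrightarrow> marginal f y C \<le> marginal f y A"
begin

lemma union_le_sum_marginal:
  "finite B \<Longrightarrow> f (A \<union> B) - f A \<le> (\<Sum>y\<in>B. marginal f y A)"
proof (induction B rule: finite_induct)
  case empty
  show ?case by simp
next
  case (insert y B)
  have "f (A \<union> insert y B) - f A = marginal f y (A \<union> B) + (f (A \<union> B) - f A)"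
    by (simp add: marginal_def)
  also have "\<dots> \<le> marginal f y A + (\<Sum>y\<in>B. marginal f y A)"
    using diminishing_returns[of A "A \<union> B" y] insert.IH by simp
  finally show ?case using insert by simp
qed

lemma greedy_output_value:
  assumes "greedy_output U f S"
  shows "f S = f U"
proof -
  have reach: "greedy_reach U f S" and stop: "\<forall>u \<in> U - S. marginal f u S \<le> 0"
    using assms unfolding greedy_output_def by (auto simp: not_less)
  have SU: "S \<subseteq> U" using greedy_reach_subset[OF reach] .
  have "f (S \<union> U) - f S \<le> (\<Sum>y\<in>U. marginal f y S)"
    using union_le_sum_marginal[OF finite_U] .
  also have "\<dots> \<le> 0"
  proof (rule sum_nonpos)
    fix y assume "y \<in> U"
    then show "marginal f y S \<le> 0" using stop by (cases "y \<in> S") (auto simp: marginal_member)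
  qed
  finally show ?thesis using mono[OF SU] SU by (simp add: Un_absorb1)
qed

lemma greedy_choice_gain:
  assumes S: "S \<subseteq> U" and T: "T \<subseteq> U" "f T = f U"
    and positive: "\<exists>u \<in> U - S. marginal f u S > 0"
    and best: "\<forall>u \<in> U - S. marginal f u S \<le> marginal f x S"
  shows "marginal f x S \<ge> 1" and "f U - f S \<le> int (card T) * marginal f x S"
proof -
  obtain u where u: "u \<in> U - S" "marginal f u S > 0" using positive by blast
  moreover have "marginal f u S \<le> marginal f x S" using best u(1) by blast
  ultimately show gain: "marginal f x S \<ge> 1" by linarith
  have "marginal f y S \<le> marginal f x S" if "y \<in> T" for y
    using that T(1) best gain by (cases "y \<in> S") (auto simp: marginal_member)
  then have "(\<Sum>y\<in>T. marginal f y S) \<le> of_nat (card T) * marginal f x S"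
    by (rule sum_bounded_above)
  moreover have "f (S \<union> T) = f U"
    using mono[of T "S \<union> T"] mono[of "S \<union> T" U] S T by auto
  ultimately show "f U - f S \<le> int (card T) * marginal f x S"
    using union_le_sum_marginal[OF finite_subset[OF T(1) finite_U], of S] by simp
qed

lemma greedy_reach_card_le:
  fixes d :: nat
  assumes reach: "greedy_reach U f S"
    and T: "T \<subseteq> U" "f T = f U" and k: "card T > 0"
    and d: "d \<ge> 1" "f U - f {} \<le> int (card T) * int d"
  shows "card S \<le> card T * ln d + greedy_potential (card T) (f U - f S)"
  using reach
proof (induction rule: greedy_reach.induct)
  case start
  have "0 \<le> f U - f {}" using mono by simp
  moreover have "real_of_int (f U - f {}) \<le> real_of_int (int (card T) * int d)"
    using d(2) by (simp only: of_int_le_iff)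
  ultimately show ?case
    using greedy_potential_ge[of "card T" d "f U - f {}"] k d(1) by simp
next
  case (step S x)
  define \<delta> where "\<delta> = marginal f x S"
  have SU: "S \<subseteq> U" using greedy_reach_subset[OF step.hyps(1)] .
  have \<delta>: "\<delta> \<ge> 1" "f U - f S \<le> int (card T) * \<delta>"
    using greedy_choice_gain[OF SU T step.hyps(2,4)] unfolding \<delta>_def by auto
  have "0 \<le> (f U - f S) - \<delta>"
    using mono[of "insert x S" U] SU step.hyps(3) unfolding \<delta>_def marginal_def by auto
  moreover have "real_of_int (f U - f S) \<le> real_of_int (int (card T) * \<delta>)"
    using \<delta>(2) by (simp only: of_int_le_iff)
  ultimately have "greedy_potential (card T) (f U - f S) + 1
      \<le> greedy_potential (card T) (real_of_int (f U - f S) - \<delta>)"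
    using \<delta>(1) k by (intro greedy_potential_step) auto
  also have "real_of_int (f U - f S) - \<delta> = f U - f (insert x S)"
    unfolding \<delta>_def marginal_def by simp
  finally have "greedy_potential (card T) (f U - f S) + 1
      \<le> greedy_potential (card T) (f U - f (insert x S))" .
  moreover have "card (insert x S) = card S + 1"
    using greedy_reach_finite[OF step.hyps(1)] step.hyps(3) by simp
  ultimately show ?case using step.IH by simp
qed

theorem greedy_output_card_le:
  fixes d :: nat
  assumes greedy: "greedy_output U f S"
    and T: "T \<subseteq> U" "f T = f U" "T \<noteq> {}"
    and d: "d \<ge> 1" "\<And>y. y \<in> U \<Longrightarrow> marginal f y {} \<le> d"
  shows "card S \<le> (1 + ln d) * card T"
proof -
  have "f U - f {} = f ({} \<union> T) - f {}" using T(2) by simp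
  also have "\<dots> \<le> (\<Sum>y\<in>T. marginal f y {})"
    using union_le_sum_marginal[OF finite_subset[OF T(1) finite_U]] .
  also have "\<dots> \<le> int (card T) * int d" using d(2) T(1) by (intro sum_bounded_above) auto
  finally have "f U - f {} \<le> int (card T) * int d" .
  moreover have k: "card T > 0"
    using T(3) finite_subset[OF T(1) finite_U] by (simp add: card_gt_0_iff)
  ultimately have "card S \<le> card T * ln d + greedy_potential (card T) (f U - f S)"
    using greedy_reach_card_le[OF _ T(1,2) k d(1)] greedy unfolding greedy_output_def by blast
  also have "\<dots> = (1 + ln d) * card T"
    using greedy_output_value[OF greedy] k by (simp add: greedy_potential_le algebra_simps)
  finally show ?thesis .
qed

end

definition cover_count :: "'a set \<Rightarrow> ('a \<Rightarrow> 'a \<Rightarrow> bool) \<Rightarrow> nat \<Rightarrow> 'a set \<Rightarrow> 'a \<Rightarrow> nat" where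
  "cover_count V E m A v = card (nbhd_in V E A v) + (if v \<in> A then m - 1 else 0)"

lemma mA_eq_min_cover_count: "m \<ge> 1 \<Longrightarrow> mA V E m A v = min m (cover_count V E m A v)"
  unfolding mA_def cover_count_def by auto

lemma mA_le: "mA V E m A v \<le> m"
  unfolding mA_def by auto

lemma mA_eq_iff:
  "m \<ge> 1 \<Longrightarrow> mA V E m A v = m \<longleftrightarrow> card (nbhd_in V E A v) \<ge> (if v \<in> A then 1 else m)"
  unfolding mA_def by auto

lemma finite_nbhd_in: "finite V \<Longrightarrow> finite (nbhd_in V E A v)"
  unfolding nbhd_in_def nbhd_def by auto

lemma card_nbhd_in_insert:
  assumes "finite V"
  shows "card (nbhd_in V E (insert y A) v) =
    card (nbhd_in V E A v) + (if y \<notin> A \<and> y \<in> V \<and> E v y then 1 else 0)"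
proof (cases "y \<notin> A \<and> y \<in> V \<and> E v y")
  case True
  then have "nbhd_in V E (insert y A) v = insert y (nbhd_in V E A v)"
    and "y \<notin> nbhd_in V E A v"
    unfolding nbhd_in_def nbhd_def by auto
  then show ?thesis using True finite_nbhd_in[OF assms] by simp
next
  case False
  then have "nbhd_in V E (insert y A) v = nbhd_in V E A v"
    unfolding nbhd_in_def nbhd_def by auto
  then show ?thesis using False by simp
qed

lemma cover_count_insert:
  assumes "finite V" "\<not> E v v"
  shows "cover_count V E m (insert y A) v = cover_count V E m A v +
    (if y \<in> A then 0 else (if y \<in> V \<and> E v y then 1 else 0) + (if y = v then m - 1 else 0))"
  using assms unfolding cover_count_def card_nbhd_in_insert[OF assms(1)] by auto

lemma cover_count_mono:
  assumes "finite V" "A \<subseteq> C"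
  shows "cover_count V E m A v \<le> cover_count V E m C v"
proof -
  have "card (nbhd_in V E A v) \<le> card (nbhd_in V E C v)"
    using assms finite_nbhd_in[OF assms(1)] by (intro card_mono) (auto simp: nbhd_in_def)
  then show ?thesis unfolding cover_count_def using assms by auto
qed

lemma min_add_diff_antimono:
  fixes a a' e e' m :: nat
  assumes "a \<le> a'" "e' \<le> e"
  shows "int (min m (a' + e')) - int (min m a') \<le> int (min m (a + e)) - int (min m a)"
  using assms by (auto simp: min_def)

lemma mA_diminishing_returns:
  assumes "finite V" "\<And>v. \<not> E v v" "m \<ge> 1" "A \<subseteq> C"
  shows "int (mA V E m (insert y C) v) - int (mA V E m C v)
    \<le> int (mA V E m (insert y A) v) - int (mA V E m A v)"
proof -
  define gain where
    "gain = (if y \<in> V \<and> E v y then 1 else 0) + (if y = v then m - 1 else (0::nat))"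
  have "(if y \<in> C then 0 else gain) \<le> (if y \<in> A then 0 else gain)" using assms(4) by auto
  with cover_count_mono[OF assms(1,4)] show ?thesis
    unfolding mA_eq_min_cover_count[OF assms(3)] cover_count_insert[OF assms(1,2)] gain_def[symmetric]
    by (rule min_add_diff_antimono)
qed

lemma submodular_cover_f_ftd:
  assumes "finite V" "\<And>v. \<not> E v v" "m \<ge> 1"
  shows "submodular_cover V (f_ftd V E m)"
proof
  fix A C :: "'a set" and y
  assume "A \<subseteq> C"
  show "f_ftd V E m A \<le> f_ftd V E m C"
    unfolding f_ftd_def mA_eq_min_cover_count[OF assms(3)]
    using cover_count_mono[OF assms(1) \<open>A \<subseteq> C\<close>] by (intro sum_mono) (simp add: min.coboundedI2)
  show "marginal (f_ftd V E m) y C \<le> marginal (f_ftd V E m) y A"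
    unfolding marginal_def f_ftd_def
    using mA_diminishing_returns[of V E m A C y, OF assms \<open>A \<subseteq> C\<close>]
    by (simp add: sum_subtractf[symmetric] sum_mono)
qed (use assms in simp)

lemma f_ftd_eq_iff_is_fttds:
  assumes "finite V" "m \<ge> 1" "A \<subseteq> V"
  shows "f_ftd V E m A = int m * int (card V) \<longleftrightarrow> is_fttds V E m A"
proof -
  have full: "int m * int (card V) = (\<Sum>v\<in>V. int m)" by simp
  have "f_ftd V E m A = int m * int (card V) \<longleftrightarrow> (\<forall>v\<in>V. mA V E m A v = m)"
  proof
    assume "f_ftd V E m A = int m * int (card V)"
    then have "(\<Sum>v\<in>V. int (mA V E m A v)) = (\<Sum>v\<in>V. int m)"
      unfolding full f_ftd_def .
    then show "\<forall>v\<in>V. mA V E m A v = m"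
      using sum_mono_inv[of "\<lambda>v. int (mA V E m A v)" V "\<lambda>_. int m"] assms(1) by (simp add: mA_le)
  qed (simp add: f_ftd_def)
  also have "\<dots> \<longleftrightarrow> is_fttds V E m A"
    using assms(2,3) unfolding mA_eq_iff[OF assms(2)] is_fttds_def by auto
  finally show ?thesis .
qed

lemma f_ftd_empty: "m \<ge> 1 \<Longrightarrow> f_ftd V E m {} = 0"
  unfolding f_ftd_def mA_def nbhd_in_def by simp

lemma card_nbhd_le_max_degree: "finite V \<Longrightarrow> v \<in> V \<Longrightarrow> card (nbhd V E v) \<le> max_degree V E"
  unfolding max_degree_def by (intro Max_ge) auto

lemma max_degree_ge_1:
  assumes "finite V" "v \<in> V" "nbhd V E v \<noteq> {}"
  shows "max_degree V E \<ge> 1"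
proof -
  have "card (nbhd V E v) \<ge> 1"
    using assms by (simp add: Suc_le_eq card_gt_0_iff nbhd_def)
  then show ?thesis using card_nbhd_le_max_degree[OF assms(1,2), of E] by linarith
qed

lemma nbhd_in_singleton: "y \<in> V \<Longrightarrow> nbhd_in V E {y} v = (if E v y then {y} else {})"
  by (auto simp: nbhd_in_def nbhd_def)

lemma marginal_f_ftd_empty_le:
  assumes finV: "finite V" and sym: "\<And>u v. E u v \<Longrightarrow> E v u" and irrefl: "\<And>v. \<not> E v v"
    and m: "m \<ge> 1" and y: "y \<in> V"
  shows "marginal (f_ftd V E m) y {} \<le> int (max_degree V E + m - 1)"
proof -
  have "marginal (f_ftd V E m) y {} = f_ftd V E m {y}"
    by (simp add: marginal_def f_ftd_empty[OF m])
  also have "\<dots> \<le> (\<Sum>v\<in>V. int (cover_count V E m {y} v))"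
    unfolding f_ftd_def mA_eq_min_cover_count[OF m] by (intro sum_mono) simp
  also have "\<dots> = (\<Sum>v\<in>V. int ((if E v y then 1 else 0) + (if v = y then m - 1 else 0)))"
    using finV irrefl y
    by (intro sum.cong) (auto simp: cover_count_def nbhd_in_singleton)
  also have "\<dots> = int (card {v \<in> V. E v y} + (m - 1))"
    using finV y by (simp add: sum.distrib sum.inter_filter[symmetric] flip: of_nat_sum)
  also have "{v \<in> V. E v y} = nbhd V E y" unfolding nbhd_def using sym by blast
  finally show ?thesis using card_nbhd_le_max_degree[OF finV y, of E] m by linarith
qed

lemma is_fttds_vertex_set:
  assumes "finite V" "\<And>v. v \<in> V \<Longrightarrow> nbhd V E v \<noteq> {}"
  shows "is_fttds V E m V"
proof -
  have "card (nbhd_in V E V v) \<ge> 1" if "v \<in> V" for v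
    using assms that finite_nbhd_in[OF assms(1)]
    by (simp add: nbhd_in_def Suc_le_eq card_gt_0_iff Int_absorb2 nbhd_def)
  then show ?thesis unfolding is_fttds_def by blast
qed

lemma is_fttds_nonempty: "is_fttds V E m S \<Longrightarrow> m \<ge> 1 \<Longrightarrow> V \<noteq> {} \<Longrightarrow> S \<noteq> {}"
  unfolding is_fttds_def nbhd_in_def by auto

theorem mainTheorem10:
  fixes V :: "'a set" and E :: "'a \<Rightarrow> 'a \<Rightarrow> bool" and m :: nat and S Sstar :: "'a set"
  assumes finV: "finite V"
    and sym: "\<And>u v. E u v \<Longrightarrow> E v u"
    and irrefl: "\<And>v. \<not> E v v"
    and no_isolated: "\<And>v. v \<in> V \<Longrightarrow> nbhd V E v \<noteq> {}"
    and m_ge: "m \<ge> 1"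
    and greedy: "greedy_output V (f_ftd V E m) S"
    and opt: "is_min_fttds V E m Sstar"
  shows "is_fttds V E m S \<and>
         real (card S) \<le> (1 + ln (real (max_degree V E + m - 1))) * real (card Sstar)"
proof -
  interpret submodular_cover V "f_ftd V E m"
    using submodular_cover_f_ftd[OF finV irrefl m_ge] .
  have SV: "S \<subseteq> V"
    using greedy greedy_reach_subset unfolding greedy_output_def by blast
  have Sstar: "is_fttds V E m Sstar" "Sstar \<subseteq> V"
    using opt unfolding is_min_fttds_def is_fttds_def by auto
  have full: "f_ftd V E m V = int m * int (card V)"
    using f_ftd_eq_iff_is_fttds[OF finV m_ge] is_fttds_vertex_set[OF finV no_isolated] by blast
  have "is_fttds V E m S"
    using f_ftd_eq_iff_is_fttds[OF finV m_ge SV] greedy_output_value[OF greedy] full by simp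
  moreover have "real (card S) \<le> (1 + ln (real (max_degree V E + m - 1))) * real (card Sstar)"
  proof (cases "V = {}")
    case True
    then show ?thesis using SV Sstar(2) by simp
  next
    case False
    then obtain v where v: "v \<in> V" by blast
    have "max_degree V E + m - 1 \<ge> 1"
      using max_degree_ge_1[OF finV v no_isolated[OF v]] m_ge by linarith
    moreover have "f_ftd V E m Sstar = f_ftd V E m V"
      using f_ftd_eq_iff_is_fttds[OF finV m_ge Sstar(2)] Sstar(1) full by simp
    ultimately show ?thesis
      using greedy_output_card_le[OF greedy Sstar(2) _ is_fttds_nonempty[OF Sstar(1) m_ge False]]
        marginal_f_ftd_empty_le[of V E m, OF finV sym irrefl m_ge] by blast
  qed
  ultimately show ?thesis ..
qed

end
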